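(* Let $n=\prod_{j=1}^k p_j^{a_j}$ be the factorization of $n$ into powers of distinct primes, let $\omega\in(\mathbb{Z}/n\mathbb{Z})^\times$ and $r\in\mathbb{Z}/n\mathbb{Z}$, and let $X=\langle\omega\rangle r$. For each $j$, let $\psi_j:\mathbb{Z}/n\mathbb{Z}\to\mathbb{Z}/p_j^{a_j}\mathbb{Z}$ be the natural reduction homomorphism, let $x_j\in\mathbb{Z}/p_j^{a_j}\mathbb{Z}$ be the multiplicative inverse of $n/p_j^{a_j}$ modulo $p_j^{a_j}$, and let $X_j=\langle\psi_j(\omega)\rangle\, x_j\psi_j(r)\subseteq\mathbb{Z}/p_j^{a_j}\mathbb{Z}$. If the orbit sizes $|X_1|,\dots,|X_k|$ are pairwise coprime, then for every $y\in\mathbb{Z}/n\mathbb{Z}$, $$\sigma_X(y)=\prod_{j=1}^k \sigma_{X_j}(\psi_j(y)),$$ where $\sigma_{X_j}$ is the supercharacter of $\mathbb{Z}/p_j^{a_j}\mathbb{Z}$ attached to $X_j$.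
   Context: Write $e(\theta)=\exp(2\pi i\theta)$. For a positive integer $m$, a subgroup $A$ of $(\mathbb{Z}/m\mathbb{Z})^\times$ and $r\in\mathbb{Z}/m\mathbb{Z}$, let $X=Ar=\{ar:a\in A\}$ and define $\sigma_X:\mathbb{Z}/m\mathbb{Z}\to\mathbb{C}$ by $\sigma_X(y)=\sum_{x\in X}e\left(\frac{xy}{m}\right)$. Here $\langle\omega\rangle$ denotes the cyclic subgroup generated by $\omega$. *)

theory Defs
  imports "HOL-Analysis.Analysis" "HOL-Number_Theory.Number_Theory"
begin

definition e :: "real \<Rightarrow> complex" where
  "e \<theta> = exp (2 * of_real pi * \<i> * of_real \<theta>)"

text \<open>Elements of Z/mZ are represented by integers in {0..<m}.
  The orbit <w> r = {w^k r mod m | k}.\<close>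
definition cyc_orbit :: "nat \<Rightarrow> int \<Rightarrow> int \<Rightarrow> int set" where
  "cyc_orbit m w r = {(w ^ k * r) mod int m | k. True}"

definition sigma :: "nat \<Rightarrow> int set \<Rightarrow> int \<Rightarrow> complex" where
  "sigma m X y = (\<Sum>x\<in>X. e (of_int (x * y) / of_nat m))"

definition ppart :: "nat \<Rightarrow> nat \<Rightarrow> nat" where
  "ppart n p = p ^ multiplicity p n"

definition local_orbit :: "nat \<Rightarrow> int \<Rightarrow> int \<Rightarrow> int \<Rightarrow> nat \<Rightarrow> int set" where
  "local_orbit n w r xp p =
     cyc_orbit (ppart n p) (w mod int (ppart n p)) ((xp * (r mod int (ppart n p))) mod int (ppart n p))"

end

theory Submission
  imports Defs
begin

text \<open>Write \<open>n\<close> as the product of its prime power parts \<open>q p\<close>. Since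
  \<open>x p * (n div q p) \<equiv> 1 (mod q p)\<close>, these numbers sum to \<open>1\<close> modulo \<open>n\<close>, hence
  \<open>e (c / n) = (\<Prod>p. e (c * x p / q p))\<close> for every integer \<open>c\<close>. The orbit point
  \<open>\<omega>^k r mod n\<close> is determined by its scaled reductions \<open>x p \<omega>^k r mod q p \<in> X p\<close>, and each of
  these has exact period \<open>|X p|\<close> in \<open>k\<close>. The periods being pairwise coprime, the Chinese remainder
  theorem shows that \<open>\<omega>^k r mod n\<close> has period \<open>\<Prod>p. |X p|\<close> and that over one period the tuple of
  reductions runs exactly once through \<open>\<Prod>p. X p\<close>. Summing the factorised character along this
  bijection turns \<open>\<sigma>\<^sub>X(y)\<close> into \<open>\<Prod>p. \<sigma>\<^sub>X\<^sub>p(y mod q p)\<close>.\<close>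

lemma e_add: "e (a + b) = e a * e b"
  unfolding e_def by (simp add: distrib_left exp_add)

lemma e_of_int: "e (of_int t) = 1"
proof -
  have "e (of_int t) = exp ((2 * of_int t * pi) * \<i>)"
    unfolding e_def by (simp add: ac_simps)
  also have "\<dots> = 1" by (rule exp_integer_2pi) simp
  finally show ?thesis .
qed

lemma e_sum: "finite I \<Longrightarrow> e (sum f I) = (\<Prod>i\<in>I. e (f i))"
  unfolding e_def by (simp add: sum_distrib_left exp_sum)

lemma e_div_cong:
  assumes "m > 0" "[a = b] (mod int m)"
  shows "e (of_int a / real m) = e (of_int b / real m)"
proof -
  obtain t where t: "a = b + int m * t"
    using assms(2) by (metis cong_iff_lin cong_sym)
  have "of_int a / real m = of_int b / real m + of_int t"
    using assms(1) by (simp add: t field_simps)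
  then show ?thesis by (simp add: e_add e_of_int)
qed

lemma e_div_prod_coprime:
  fixes q :: "'a \<Rightarrow> nat" and x :: "'a \<Rightarrow> int" and c :: int
  assumes fin: "finite P" and q_pos: "\<forall>p\<in>P. q p > 0"
    and q_coprime: "\<forall>p\<in>P. \<forall>p'\<in>P. p \<noteq> p' \<longrightarrow> coprime (q p) (q p')"
    and n: "n = (\<Prod>p\<in>P. q p)"
    and x: "\<forall>p\<in>P. [x p * int (n div q p) = 1] (mod int (q p))"
  shows "e (of_int c / real n) = (\<Prod>p\<in>P. e (of_int (c * x p) / real (q p)))"
proof -
  have n_pos: "n > 0" using fin q_pos by (simp add: n)
  have cofactor: "n div q p = (\<Prod>p'\<in>P - {p}. q p')" if "p \<in> P" for p
    using fin that q_pos by (simp add: n prod.remove)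
  define s where "s = (\<Sum>p\<in>P. x p * int (n div q p))"
  \<comment> \<open>\<open>s\<close> is the sum of the idempotents of the Chinese remainder decomposition\<close>
  have "[s = 1] (mod int (q p))" if "p \<in> P" for p
  proof -
    have "int (q p) dvd x p' * int (n div q p')" if "p' \<in> P - {p}" for p'
    proof -
      have "q p dvd n div q p'"
        using fin that \<open>p \<in> P\<close> by (auto simp: cofactor intro: dvd_prodI)
      then show ?thesis by (simp add: dvd_mult)
    qed
    then have "[(\<Sum>p'\<in>P - {p}. x p' * int (n div q p')) = 0] (mod int (q p))"
      by (simp add: cong_0_iff) (rule dvd_sum, simp)
    then have "[x p * int (n div q p) + (\<Sum>p'\<in>P - {p}. x p' * int (n div q p')) = 1 + 0]
        (mod int (q p))"
      using x that by (intro cong_add) auto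
    then show ?thesis
      using fin that by (simp add: s_def sum.remove)
  qed
  then have "[s = 1] (mod (\<Prod>p\<in>P. int (q p)))"
    using q_coprime by (intro cong_cong_prod_coprime) auto
  then have "[s = 1] (mod int n)"
    unfolding n of_nat_prod .
  then have "[c * s = c] (mod int n)"
    using cong_scalar_left[of s 1 "int n" c] by simp
  from e_div_cong[OF n_pos this]
  have "e (of_int c / real n) = e (of_int (c * s) / real n)" ..
  also have "of_int (c * s) / real n = (\<Sum>p\<in>P. of_int (c * x p) / real (q p))"
  proof -
    have "of_int (c * (x p * int (n div q p))) / real n = of_int (c * x p) / real (q p)"
      if "p \<in> P" for p
    proof -
      have "real (n div q p) / real n = 1 / real (q p)"
        using n_pos q_pos that fin by (simp add: real_of_nat_div n dvd_prodI)
      then have "of_int (c * (x p * int (n div q p))) / real n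
          = of_int (c * x p) * (1 / real (q p))"
        by (simp add: times_divide_eq_right[symmetric] mult.assoc del: times_divide_eq_right)
      then show ?thesis by simp
    qed
    then show ?thesis
      unfolding s_def sum_distrib_left of_int_sum sum_divide_distrib by (rule sum.cong[OF refl])
  qed
  also have "e \<dots> = (\<Prod>p\<in>P. e (of_int (c * x p) / real (q p)))"
    by (rule e_sum[OF fin])
  finally show ?thesis .
qed

lemma bij_betw_period:
  fixes h :: "nat \<Rightarrow> 'a"
  assumes "d > 0" and period: "\<And>k k'. h k = h k' \<longleftrightarrow> [k = k'] (mod d)"
  shows "bij_betw h {0..<d} (range h)"
proof (rule bij_betw_imageI)
  show "inj_on h {0..<d}"
    by (auto simp: inj_on_def period cong_def)
  have "h k \<in> h ` {0..<d}" for k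
    using \<open>d > 0\<close> by (intro image_eqI[of _ _ "k mod d"]) (simp_all add: period cong_def)
  then show "h ` {0..<d} = range h"
    by auto
qed

lemma shift_invariant_eq_iff_cong_card:
  fixes h :: "nat \<Rightarrow> 'a"
  assumes fin: "finite (range h)"
    and shift: "\<And>j k k'. h (j + k) = h (j + k') \<longleftrightarrow> h k = h k'"
  shows "h k = h k' \<longleftrightarrow> [k = k'] (mod card (range h))"
proof -
  have "\<exists>d. 0 < d \<and> h d = h 0"
  proof -
    have "\<not> inj h"
      using fin range_inj_infinite by blast
    then obtain i j where "h i = h j" "i < j"
      by (metis linorder_inj_onI' UNIV_I)
    then have "h (j - i) = h 0"
      using shift[of i "j - i" 0] by simp
    then show ?thesis
      using \<open>i < j\<close> by (intro exI[of _ "j - i"]) simp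
  qed
  define d where "d = (LEAST d. 0 < d \<and> h d = h 0)"
  have d: "0 < d" "h d = h 0"
    using LeastI_ex[OF \<open>\<exists>d. 0 < d \<and> h d = h 0\<close>] by (auto simp: d_def)
  have returns: "h s = h 0 \<longleftrightarrow> d dvd s" for s
  proof (induction s rule: less_induct)
    case (less s)
    show ?case
    proof (cases "s < d")
      case True
      then have "h s = h 0 \<longleftrightarrow> s = 0"
        using not_less_Least[of s "\<lambda>d. 0 < d \<and> h d = h 0"] by (auto simp: d_def)
      then show ?thesis
        using True by (auto dest: dvd_imp_le)
    next
      case False
      have "h s = h 0 \<longleftrightarrow> h (s - d) = h 0"
        using shift[of d "s - d" 0] False d(2) by simp
      also have "\<dots> \<longleftrightarrow> d dvd s - d"
        using less.IH[of "s - d"] d(1) False by simp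
      also have "\<dots> \<longleftrightarrow> d dvd s"
        using False by (simp add: dvd_minus_self)
      finally show ?thesis .
    qed
  qed
  have period: "h k = h k' \<longleftrightarrow> [k = k'] (mod d)" for k k'
  proof -
    have ordered: "h k = h k' \<longleftrightarrow> [k' = k] (mod d)" if "k \<le> k'" for k k'
    proof -
      have "h k = h k' \<longleftrightarrow> h 0 = h (k' - k)"
        using shift[of k 0 "k' - k"] that by simp
      then show ?thesis
        using returns[of "k' - k"] that by (auto simp: cong_altdef_nat)
    qed
    show ?thesis
    proof (cases "k \<le> k'")
      case True
      then show ?thesis using ordered cong_sym_eq by blast
    next
      case False
      then show ?thesis using ordered[of k' k] by (metis nat_le_linear)
    qed
  qed
  have "card (range h) = d"
    using bij_betw_same_card[OF bij_betw_period[OF d(1) period]] by simp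
  then show ?thesis
    using period by simp
qed

lemma cyc_orbit_eq_range: "cyc_orbit m u z = range (\<lambda>k. (u ^ k * z) mod int m)"
  unfolding cyc_orbit_def by auto

lemma cyc_orbit_period:
  assumes "m > 0" and "coprime u (int m)"
  shows "finite (cyc_orbit m u z)" and "card (cyc_orbit m u z) > 0"
    and "(u ^ k * z) mod int m = (u ^ k' * z) mod int m
      \<longleftrightarrow> [k = k'] (mod card (cyc_orbit m u z))"
proof -
  let ?h = "\<lambda>k. (u ^ k * z) mod int m"
  have "cyc_orbit m u z \<subseteq> {0..<int m}"
    using assms(1) by (auto simp: cyc_orbit_def)
  then show fin: "finite (cyc_orbit m u z)"
    by (rule finite_subset) simp
  then show "card (cyc_orbit m u z) > 0"
    by (auto simp: card_gt_0_iff cyc_orbit_def)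
  have "?h (j + k) = ?h (j + k') \<longleftrightarrow> ?h k = ?h k'" for j k k'
  proof -
    have "coprime (u ^ j) (int m)"
      using assms(2) by simp
    then have "[u ^ j * (u ^ k * z) = u ^ j * (u ^ k' * z)] (mod int m)
        \<longleftrightarrow> [u ^ k * z = u ^ k' * z] (mod int m)"
      by (rule cong_mult_lcancel)
    then show ?thesis
      by (simp add: cong_def power_add ac_simps)
  qed
  then show "?h k = ?h k' \<longleftrightarrow> [k = k'] (mod card (cyc_orbit m u z))"
    using shift_invariant_eq_iff_cong_card[of ?h] fin by (simp add: cyc_orbit_eq_range)
qed

lemma cong_prod_coprime_iff_nat:
  fixes L :: "'a \<Rightarrow> nat"
  assumes "finite P" and "\<forall>p\<in>P. \<forall>p'\<in>P. p \<noteq> p' \<longrightarrow> coprime (L p) (L p')"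
  shows "[k = k'] (mod (\<Prod>p\<in>P. L p)) \<longleftrightarrow> (\<forall>p\<in>P. [k = k'] (mod L p))"
proof
  assume "[k = k'] (mod (\<Prod>p\<in>P. L p))"
  then show "\<forall>p\<in>P. [k = k'] (mod L p)"
    using assms(1) by (auto intro: cong_dvd_modulus_nat dvd_prodI)
next
  assume "\<forall>p\<in>P. [k = k'] (mod L p)"
  then show "[k = k'] (mod (\<Prod>p\<in>P. L p))"
    using assms(2) by (rule cong_cong_prod_coprime_nat)
qed

lemma cong_prod_coprime_iff_int:
  fixes q :: "'a \<Rightarrow> int"
  assumes "finite P" and "\<forall>p\<in>P. \<forall>p'\<in>P. p \<noteq> p' \<longrightarrow> coprime (q p) (q p')"
  shows "[a = b] (mod (\<Prod>p\<in>P. q p)) \<longleftrightarrow> (\<forall>p\<in>P. [a = b] (mod q p))"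
proof
  assume "[a = b] (mod (\<Prod>p\<in>P. q p))"
  then show "\<forall>p\<in>P. [a = b] (mod q p)"
    using assms(1) by (auto intro: cong_dvd_modulus dvd_prodI)
next
  assume "\<forall>p\<in>P. [a = b] (mod q p)"
  then show "[a = b] (mod (\<Prod>p\<in>P. q p))"
    using assms(2) by (rule cong_cong_prod_coprime)
qed

lemma bij_betw_coprime_periods:
  fixes L :: "'a \<Rightarrow> nat" and g :: "'a \<Rightarrow> nat \<Rightarrow> 'b"
  assumes fin: "finite P" and L_pos: "\<forall>p\<in>P. L p > 0"
    and L_coprime: "\<forall>p\<in>P. \<forall>p'\<in>P. p \<noteq> p' \<longrightarrow> coprime (L p) (L p')"
    and period: "\<And>p k k'. p \<in> P \<Longrightarrow> g p k = g p k' \<longleftrightarrow> [k = k'] (mod L p)"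
  shows "bij_betw (\<lambda>k. restrict (\<lambda>p. g p k) P) {..<(\<Prod>p\<in>P. L p)} (PiE P (\<lambda>p. range (g p)))"
proof (rule bij_betw_imageI)
  show "inj_on (\<lambda>k. restrict (\<lambda>p. g p k) P) {..<(\<Prod>p\<in>P. L p)}"
  proof (rule inj_onI)
    fix k k' assume k: "k \<in> {..<(\<Prod>p\<in>P. L p)}" "k' \<in> {..<(\<Prod>p\<in>P. L p)}"
      and eq: "restrict (\<lambda>p. g p k) P = restrict (\<lambda>p. g p k') P"
    have "[k = k'] (mod L p)" if "p \<in> P" for p
      using fun_cong[OF eq, of p] period[OF that] that by simp
    then have "[k = k'] (mod (\<Prod>p\<in>P. L p))"
      using cong_prod_coprime_iff_nat[OF fin L_coprime] by blast
    then show "k = k'"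
      using k by (auto intro: cong_less_modulus_unique_nat)
  qed
  show "(\<lambda>k. restrict (\<lambda>p. g p k) P) ` {..<(\<Prod>p\<in>P. L p)} = PiE P (\<lambda>p. range (g p))"
  proof
    show "PiE P (\<lambda>p. range (g p)) \<subseteq> (\<lambda>k. restrict (\<lambda>p. g p k) P) ` {..<(\<Prod>p\<in>P. L p)}"
    proof
      fix f assume f: "f \<in> PiE P (\<lambda>p. range (g p))"
      then have "\<forall>p\<in>P. \<exists>k. f p = g p k"
        by (auto simp: PiE_iff)
      then obtain kk where kk: "\<forall>p\<in>P. f p = g p (kk p)"
        by metis
      obtain K where K: "K < (\<Prod>p\<in>P. L p)" "\<forall>p\<in>P. [K = kk p] (mod L p)"
        using chinese_remainder_unique_nat[OF fin _ L_coprime, of kk] L_pos by blast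
      have "restrict (\<lambda>p. g p K) P = restrict f P"
        using K(2) kk period by (intro restrict_ext) simp
      also have "\<dots> = f"
        using f by (rule PiE_restrict)
      finally show "f \<in> (\<lambda>k. restrict (\<lambda>p. g p k) P) ` {..<(\<Prod>p\<in>P. L p)}"
        using K(1) by force
    qed
  qed auto
qed

lemma sum_prod_coprime_periods:
  fixes L :: "'a \<Rightarrow> nat" and g :: "'a \<Rightarrow> nat \<Rightarrow> 'b"
    and F :: "'a \<Rightarrow> 'b \<Rightarrow> 'c::comm_semiring_1"
  assumes fin: "finite P" and L_pos: "\<forall>p\<in>P. L p > 0"
    and L_coprime: "\<forall>p\<in>P. \<forall>p'\<in>P. p \<noteq> p' \<longrightarrow> coprime (L p) (L p')"
    and period: "\<And>p k k'. p \<in> P \<Longrightarrow> g p k = g p k' \<longleftrightarrow> [k = k'] (mod L p)"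
  shows "(\<Sum>k<(\<Prod>p\<in>P. L p). \<Prod>p\<in>P. F p (g p k)) = (\<Prod>p\<in>P. \<Sum>v\<in>range (g p). F p v)"
proof -
  have "(\<Sum>k<(\<Prod>p\<in>P. L p). \<Prod>p\<in>P. F p (g p k))
      = (\<Sum>f\<in>PiE P (\<lambda>p. range (g p)). \<Prod>p\<in>P. F p (f p))"
    using sum.reindex_bij_betw[OF bij_betw_coprime_periods[OF fin L_pos L_coprime period],
        of "\<lambda>f. \<Prod>p\<in>P. F p (f p)"]
    by simp
  also have "\<dots> = (\<Prod>p\<in>P. \<Sum>v\<in>range (g p). F p v)"
    using bij_betw_finite[OF bij_betw_period[OF _ period]] L_pos
    by (intro prod_sum_PiE[symmetric] fin) auto
  finally show ?thesis .
qed

lemma e_residue_prod_coprime: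
  fixes q :: "'a \<Rightarrow> nat" and x :: "'a \<Rightarrow> int" and a y :: int
  assumes fin: "finite P" and q_pos: "\<forall>p\<in>P. q p > 0"
    and q_coprime: "\<forall>p\<in>P. \<forall>p'\<in>P. p \<noteq> p' \<longrightarrow> coprime (q p) (q p')"
    and n: "n = (\<Prod>p\<in>P. q p)"
    and x: "\<forall>p\<in>P. [x p * int (n div q p) = 1] (mod int (q p))"
  shows "e (of_int (a mod int n * y) / real n)
    = (\<Prod>p\<in>P. e (of_int ((x p * a) mod int (q p) * (y mod int (q p))) / real (q p)))"
proof -
  have "e (of_int (a mod int n * y) / real n)
      = (\<Prod>p\<in>P. e (of_int (a mod int n * y * x p) / real (q p)))"
    by (rule e_div_prod_coprime[OF fin q_pos q_coprime n x])
  also have "\<dots> = (\<Prod>p\<in>P. e (of_int ((x p * a) mod int (q p) * (y mod int (q p))) / real (q p)))"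
  proof (rule prod.cong[OF refl])
    fix p assume "p \<in> P"
    have "q p dvd n"
      using fin \<open>p \<in> P\<close> by (simp add: n dvd_prodI)
    then have "int (q p) dvd int n"
      by simp
    then have a_mod: "[a mod int n = a] (mod int (q p))"
      by (rule cong_dvd_modulus[rotated]) simp
    have "[a mod int n * y * x p = a * y * x p] (mod int (q p))"
      by (intro cong_mult cong_refl a_mod)
    then have "[a mod int n * y * x p = x p * a * y] (mod int (q p))"
      by (simp add: ac_simps)
    moreover have "[(x p * a) mod int (q p) * (y mod int (q p)) = x p * a * y] (mod int (q p))"
      by (simp add: cong_def mod_mult_eq)
    ultimately have "[a mod int n * y * x p = (x p * a) mod int (q p) * (y mod int (q p))]
        (mod int (q p))"
      by (meson cong_sym cong_trans)
    then show "e (of_int (a mod int n * y * x p) / real (q p))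
        = e (of_int ((x p * a) mod int (q p) * (y mod int (q p))) / real (q p))"
      using q_pos \<open>p \<in> P\<close> by (intro e_div_cong) auto
  qed
  finally show ?thesis .
qed

lemma mod_eq_iff_scaled_residues:
  fixes q :: "'a \<Rightarrow> nat" and x :: "'a \<Rightarrow> int" and a b :: int
  assumes fin: "finite P"
    and q_coprime: "\<forall>p\<in>P. \<forall>p'\<in>P. p \<noteq> p' \<longrightarrow> coprime (q p) (q p')"
    and n: "n = (\<Prod>p\<in>P. q p)"
    and x: "\<forall>p\<in>P. [x p * int (n div q p) = 1] (mod int (q p))"
  shows "a mod int n = b mod int n
    \<longleftrightarrow> (\<forall>p\<in>P. (x p * a) mod int (q p) = (x p * b) mod int (q p))"
proof -
  have x_coprime: "coprime (x p) (int (q p))" if "p \<in> P" for p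
  proof -
    have "coprime (x p * int (n div q p)) (int (q p))"
      using cong_imp_coprime[OF cong_sym[OF x[rule_format, OF that]]] by simp
    then show ?thesis
      by simp
  qed
  have "a mod int n = b mod int n \<longleftrightarrow> [a = b] (mod (\<Prod>p\<in>P. int (q p)))"
    by (simp add: n cong_def)
  also have "\<dots> \<longleftrightarrow> (\<forall>p\<in>P. [a = b] (mod int (q p)))"
    using q_coprime by (intro cong_prod_coprime_iff_int fin) auto
  also have "\<dots> \<longleftrightarrow> (\<forall>p\<in>P. [x p * a = x p * b] (mod int (q p)))"
    using x_coprime cong_mult_lcancel by blast
  finally show ?thesis
    by (simp add: cong_def)
qed

lemma ppart_dvd: "ppart n p dvd n"
  unfolding ppart_def by (rule multiplicity_dvd)

lemma ppart_pos: "prime p \<Longrightarrow> ppart n p > 0"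
  unfolding ppart_def by (simp add: prime_gt_0_nat)

lemma coprime_ppart: "prime p \<Longrightarrow> prime p' \<Longrightarrow> p \<noteq> p' \<Longrightarrow> coprime (ppart n p) (ppart n p')"
  unfolding ppart_def by (simp add: primes_coprime)

lemma prod_ppart: "n > 0 \<Longrightarrow> (\<Prod>p\<in>prime_factors n. ppart n p) = n"
  using prod_prime_factors[of n] by (simp add: ppart_def)

lemma local_orbit_term:
  fixes w r xp m :: int
  shows "((w mod m) ^ k * ((xp * (r mod m)) mod m)) mod m = (xp * (w ^ k * r)) mod m"
proof -
  have "[(w mod m) ^ k * ((xp * (r mod m)) mod m) = w ^ k * (xp * r)] (mod m)"
    by (intro cong_mult cong_pow) (simp_all add: cong_def mod_mult_right_eq)
  then show ?thesis
    by (simp add: cong_def ac_simps)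
qed

lemma local_orbit_eq_range:
  "local_orbit n w r xp p = range (\<lambda>k. (xp * (w ^ k * r)) mod int (ppart n p))"
  unfolding local_orbit_def cyc_orbit_eq_range local_orbit_term ..

lemma local_orbit_period:
  assumes "prime p" and "coprime w (int n)"
  shows "finite (local_orbit n w r xp p)" and "card (local_orbit n w r xp p) > 0"
    and "(xp * (w ^ k * r)) mod int (ppart n p) = (xp * (w ^ k' * r)) mod int (ppart n p)
      \<longleftrightarrow> [k = k'] (mod card (local_orbit n w r xp p))"
proof -
  let ?q = "ppart n p"
  have "int ?q dvd int n"
    using ppart_dvd by simp
  then have "coprime w (int ?q)"
    by (rule coprime_divisors[OF dvd_refl _ assms(2)])
  then have "coprime (w mod int ?q) (int ?q)"
    using ppart_pos[OF assms(1)] by (simp add: coprime_mod_left_iff)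
  note period = cyc_orbit_period[OF ppart_pos[OF assms(1)] this]
  show "finite (local_orbit n w r xp p)" "card (local_orbit n w r xp p) > 0"
    using period(1,2) by (simp_all add: local_orbit_def)
  show "(xp * (w ^ k * r)) mod int ?q = (xp * (w ^ k' * r)) mod int ?q
      \<longleftrightarrow> [k = k'] (mod card (local_orbit n w r xp p))"
    using period(3)[where z = "(xp * (r mod int ?q)) mod int ?q" and k = k and k' = k']
    by (simp add: local_orbit_def local_orbit_term)
qed

theorem theorem2p1:
  fixes n :: nat and \<omega> r y :: int and x :: "nat \<Rightarrow> int"
  assumes "n > 0"
    and "\<omega> \<in> {0..<int n}" and "coprime \<omega> (int n)"
    and "r \<in> {0..<int n}"
    and "\<forall>p\<in>prime_factors n. x p \<in> {0..<int (ppart n p)} \<and>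
           [x p * int (n div ppart n p) = 1] (mod int (ppart n p))"
    and "\<forall>p\<in>prime_factors n. \<forall>p'\<in>prime_factors n. p \<noteq> p' \<longrightarrow>
           coprime (card (local_orbit n \<omega> r (x p) p)) (card (local_orbit n \<omega> r (x p') p'))"
    and "y \<in> {0..<int n}"
  shows "sigma n (cyc_orbit n \<omega> r) y =
    (\<Prod>p\<in>prime_factors n. sigma (ppart n p) (local_orbit n \<omega> r (x p) p) (y mod int (ppart n p)))"
proof -
  let ?P = "prime_factors n"
  define X where "X p = local_orbit n \<omega> r (x p) p" for p
  define g where "g p k = (x p * (\<omega> ^ k * r)) mod int (ppart n p)" for p k
  define E where "E p v = e (of_int (v * (y mod int (ppart n p))) / real (ppart n p))" for p v
  define N where "N = (\<Prod>p\<in>?P. card (X p))"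
  have q_pos: "\<forall>p\<in>?P. ppart n p > 0"
    and q_coprime: "\<forall>p\<in>?P. \<forall>p'\<in>?P. p \<noteq> p' \<longrightarrow> coprime (ppart n p) (ppart n p')"
    and n_eq: "n = (\<Prod>p\<in>?P. ppart n p)"
    and x_inv: "\<forall>p\<in>?P. [x p * int (n div ppart n p) = 1] (mod int (ppart n p))"
    using ppart_pos coprime_ppart in_prime_factors_imp_prime prod_ppart[OF assms(1)] assms(5)
    by metis+
  have X_eq: "X p = range (g p)" for p
    by (simp add: X_def g_def local_orbit_eq_range)
  have X_card: "card (X p) > 0" if "p \<in> ?P" for p
    using local_orbit_period(2)[OF in_prime_factors_imp_prime[OF that] assms(3)]
    by (simp add: X_def)
  have local_period: "g p k = g p k' \<longleftrightarrow> [k = k'] (mod card (X p))" if "p \<in> ?P" for p k k'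
    using local_orbit_period(3)[OF in_prime_factors_imp_prime[OF that] assms(3)]
    by (simp add: X_def g_def)
  have X_coprime: "\<forall>p\<in>?P. \<forall>p'\<in>?P. p \<noteq> p' \<longrightarrow> coprime (card (X p)) (card (X p'))"
    using assms(6) by (simp add: X_def)
  have N_pos: "N > 0"
    using X_card by (simp add: N_def)
  have global_period: "(\<omega> ^ k * r) mod int n = (\<omega> ^ k' * r) mod int n \<longleftrightarrow> [k = k'] (mod N)"
    for k k'
    using mod_eq_iff_scaled_residues[OF _ q_coprime n_eq x_inv] local_period
      cong_prod_coprime_iff_nat[OF _ X_coprime]
    by (simp add: g_def N_def)
  have "sigma n (cyc_orbit n \<omega> r) y = (\<Sum>k<N. e (of_int ((\<omega> ^ k * r) mod int n * y) / real n))"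
    using sum.reindex_bij_betw[OF bij_betw_period[OF N_pos global_period],
        of "\<lambda>v. e (of_int (v * y) / real n)"]
    by (simp add: sigma_def cyc_orbit_eq_range atLeast0LessThan)
  also have "\<dots> = (\<Sum>k<N. \<Prod>p\<in>?P. E p (g p k))"
    using e_residue_prod_coprime[OF _ q_pos q_coprime n_eq x_inv] by (simp add: E_def g_def)
  also have "\<dots> = (\<Prod>p\<in>?P. \<Sum>v\<in>range (g p). E p v)"
    unfolding N_def using X_card X_coprime local_period
    by (intro sum_prod_coprime_periods) auto
  finally show ?thesis
    by (simp add: sigma_def E_def X_def flip: X_eq)
qed

end
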